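(* Let $d\geq 2$ and $m\geq 1$ be integers. Let $\{e^d_k\}$ and $\{e^{d+m}_k\}$ be the standard bases of $\mathbb{C}^d$ and $\mathbb{C}^{d+m}$, and let $|J\rangle=\sum_{k=1}^d e^d_k$. Define $d\times(d+m)$ matrices $$V_i=\sum_{k=1}^{d}|e^d_k\rangle\langle e^{d+m}_{\mathrm{mod}(k+i-2,\,d+1)+1}|\quad (i=1,\dots,d+1),\qquad V_i=|J\rangle\langle e^{d+m}_i|\quad (i=d+2,\dots,d+m),$$ where $\mathrm{mod}(a,n)\in\{0,\dots,n-1\}$ is the remainder of $a$ modulo $n$, and let $\Phi:M_d\to M_{d+m}$ be $\Phi(X)=\frac{1}{d(d+m)}\sum_{i=1}^{d+m}V_i^\dagger XV_i$. Let $\rho=\sum_{r,s=1}^{d}E_{rs}\otimes\Phi(E_{rs})\in M_d\otimes M_{d+m}$ be the Choi state of $\Phi$. Then $\rho$ has positive partial transpose, i.e. $(T\otimes\mathrm{id})(\rho)\geq 0$, where $T$ is the transpose on $M_d$.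
   Context: $M_n$ denotes the complex $n\times n$ matrices and $E_{rs}$ the matrix units of $M_d$. *)

theory Defs
  imports Complex_Main "HOL-Library.Complex_Order"
begin

text \<open>Matrices are represented as functions from (row, column) indices to complex numbers,
  with explicit index sets. Indices are 1-based as in the paper. Matrices on
  C^d \<otimes> C^(d+m) are indexed by pairs (k, l) with k in {1..d}, l in {1..d+m}.\<close>

definition Eunit :: "nat \<Rightarrow> nat \<Rightarrow> nat \<Rightarrow> nat \<Rightarrow> complex" where
  "Eunit r s = (\<lambda>x y. if x = r \<and> y = s then 1 else 0)"

definition Vmat :: "nat \<Rightarrow> nat \<Rightarrow> nat \<Rightarrow> nat \<Rightarrow> nat \<Rightarrow> complex" where
  "Vmat d m i = (\<lambda>x y.
     if i \<le> d + 1
     then (if 1 \<le> x \<and> x \<le> d \<and> y = (x + i - 2) mod (d + 1) + 1 then 1 else 0)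
     else (if 1 \<le> x \<and> x \<le> d \<and> y = i then 1 else 0))"

definition Phi :: "nat \<Rightarrow> nat \<Rightarrow> (nat \<Rightarrow> nat \<Rightarrow> complex) \<Rightarrow> nat \<Rightarrow> nat \<Rightarrow> complex" where
  "Phi d m X = (\<lambda>a b. (1 / of_nat (d * (d + m))) *
     (\<Sum>i\<in>{1..d+m}. \<Sum>r\<in>{1..d}. \<Sum>s\<in>{1..d}.
        cnj (Vmat d m i r a) * X r s * Vmat d m i s b))"

definition choi :: "nat \<Rightarrow> nat \<Rightarrow> nat \<times> nat \<Rightarrow> nat \<times> nat \<Rightarrow> complex" where
  "choi d m = (\<lambda>(x, a) (y, b). \<Sum>r\<in>{1..d}. \<Sum>s\<in>{1..d}. Eunit r s x y * Phi d m (Eunit r s) a b)"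

definition ptrans1 :: "(nat \<times> nat \<Rightarrow> nat \<times> nat \<Rightarrow> complex) \<Rightarrow> nat \<times> nat \<Rightarrow> nat \<times> nat \<Rightarrow> complex" where
  "ptrans1 M = (\<lambda>(x, a) (y, b). M (y, a) (x, b))"

text \<open>Positive semidefiniteness of a complex matrix indexed by a finite set I:
  v^\<dagger> M v \<ge> 0 (as a complex number, i.e. real and nonnegative) for every vector v.\<close>
definition psd :: "'a set \<Rightarrow> ('a \<Rightarrow> 'a \<Rightarrow> complex) \<Rightarrow> bool" where
  "psd I M \<longleftrightarrow> (\<forall>v :: 'a \<Rightarrow> complex. (\<Sum>x\<in>I. \<Sum>y\<in>I. cnj (v x) * M x y * v y) \<ge> 0)"

end

theory Submission
  imports Defs
begin

(* For a row y and a column a there is exactly one Kraus operator V_i with a 1 at (y, a):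
   i - 1 = (a - y) mod (d + 1) if a <= d + 1, and i = a otherwise.  Hence Phi(E_yx)_ab is
   1/(d(d+m)) times the indicator that (y, a) and (x, b) select the same operator.  After the
   partial transpose the condition (a - y) = (b - x) mod (d + 1) becomes (a + x) = (b + y)
   mod (d + 1), so the matrix is, up to a positive factor, the indicator that (x, a) and
   (y, b) carry the same label.  Such a matrix is the sum of the rank-one projections onto
   the indicator vectors of the label classes, hence positive semidefinite. *)

lemma psd_cong:
  assumes "\<And>p q. p \<in> I \<Longrightarrow> q \<in> I \<Longrightarrow> M p q = N p q"
  shows "psd I M \<longleftrightarrow> psd I N"
  unfolding psd_def using assms by (simp cong: sum.cong)

lemma psd_scale:
  assumes "psd I M" and "0 \<le> c"
  shows "psd I (\<lambda>p q. c * M p q)"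
proof -
  have "(\<Sum>p\<in>I. \<Sum>q\<in>I. cnj (v p) * (c * M p q) * v q)
      = c * (\<Sum>p\<in>I. \<Sum>q\<in>I. cnj (v p) * M p q * v q)" for v
    by (simp add: sum_distrib_left ac_simps)
  then show ?thesis
    using assms unfolding psd_def by (simp add: mult_nonneg_nonneg)
qed

lemma psd_gram:
  assumes "finite L"
  shows "psd I (\<lambda>p q. \<Sum>l\<in>L. cnj (g l p) * g l q)"
  unfolding psd_def
proof
  fix v
  have "(\<Sum>p\<in>I. \<Sum>q\<in>I. cnj (v p) * (\<Sum>l\<in>L. cnj (g l p) * g l q) * v q)
      = (\<Sum>l\<in>L. cnj (\<Sum>p\<in>I. g l p * v p) * (\<Sum>q\<in>I. g l q * v q))"
    by (simp add: cnj_sum sum_distrib_left sum_distrib_right ac_simps sum.swap[of _ L])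
  also have "\<dots> \<ge> 0"
  proof (intro sum_nonneg)
    show "cnj z * z \<ge> 0" for z :: complex
      by (simp add: less_eq_complex_def)
  qed
  finally show "(\<Sum>p\<in>I. \<Sum>q\<in>I. cnj (v p) * (\<Sum>l\<in>L. cnj (g l p) * g l q) * v q) \<ge> 0" .
qed

lemma psd_same_label:
  assumes "finite I"
  shows "psd I (\<lambda>p q. of_bool (f p = f q))"
proof -
  have "of_bool (f p = f q) = (\<Sum>l\<in>f ` I. cnj (of_bool (f p = l)) * (of_bool (f q = l) :: complex))"
    if "p \<in> I" for p q
  proof -
    have "(\<Sum>l\<in>f ` I. cnj (of_bool (f p = l)) * (of_bool (f q = l) :: complex))
        = (\<Sum>l\<in>f ` I. if l = f p then of_bool (f q = f p) else 0)"
      by (intro sum.cong) auto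
    also have "\<dots> = of_bool (f q = f p)"
      by (subst sum.delta) (use that assms in auto)
    finally show ?thesis by (simp add: eq_commute)
  qed
  then show ?thesis
    using psd_gram[of "f ` I" I "\<lambda>l p. of_bool (f p = l)"] assms by (subst psd_cong) auto
qed

lemma eq_mod_add_iff_int:
  fixes u v w n :: int
  assumes "0 \<le> u" "u < n" "0 \<le> w" "w < n"
  shows "u = (v + w) mod n \<longleftrightarrow> w = (u - v) mod n"
proof -
  have "u = (v + w) mod n \<longleftrightarrow> u mod n = (v + w) mod n"
    using assms by simp
  also have "\<dots> \<longleftrightarrow> w mod n = (u - v) mod n"
    by (simp add: mod_eq_dvd_iff) (metis dvd_minus_iff minus_diff_eq diff_diff_eq add.commute)
  also have "\<dots> \<longleftrightarrow> w = (u - v) mod n"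
    using assms by simp
  finally show ?thesis .
qed

definition kraus_index :: "nat \<Rightarrow> nat \<Rightarrow> nat \<Rightarrow> nat" where
  "kraus_index d y a = (if a \<le> d + 1 then nat ((int a - int y) mod int (d + 1)) + 1 else a)"

definition ptrans_label :: "nat \<Rightarrow> nat \<times> nat \<Rightarrow> nat" where
  "ptrans_label d = (\<lambda>(x, a). if a \<le> d + 1 then (a + x) mod (d + 1) else a)"

lemma kraus_index_le_iff: "kraus_index d y a \<le> d + 1 \<longleftrightarrow> a \<le> d + 1"
proof -
  have "nat ((int a - int y) mod int (d + 1)) < d + 1"
    by (simp add: nat_less_iff)
  then show ?thesis
    by (auto simp: kraus_index_def)
qed

lemma Vmat_eq_kraus_index:
  assumes "1 \<le> i" "y \<in> {1..d}" "1 \<le> a"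
  shows "Vmat d m i y a = of_bool (i = kraus_index d y a)"
proof (cases "i \<le> d + 1 \<and> a \<le> d + 1")
  case True
  let ?n = "int (d + 1)"
  have "int (y + i - 2) = (int y - 1) + (int i - 1)"
    using assms by auto
  then have "int ((y + i - 2) mod (d + 1)) = ((int y - 1) + (int i - 1)) mod ?n"
    by (metis of_nat_mod)
  then have "a = (y + i - 2) mod (d + 1) + 1 \<longleftrightarrow> int a - 1 = ((int y - 1) + (int i - 1)) mod ?n"
    by arith
  also have "\<dots> \<longleftrightarrow> int i - 1 = (int a - int y) mod ?n"
    using True assms by (subst eq_mod_add_iff_int) auto
  also have "\<dots> \<longleftrightarrow> i = kraus_index d y a"
    using True assms by (auto simp: kraus_index_def)
  finally show ?thesis
    using True assms by (simp add: Vmat_def)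
next
  case False
  have "(y + i - 2) mod (d + 1) < d + 1"
    by simp
  then show ?thesis
    using False assms kraus_index_le_iff[of d y a] by (auto simp: Vmat_def kraus_index_def)
qed

lemma ptrans_label_le_iff: "ptrans_label d (x, a) \<le> d + 1 \<longleftrightarrow> a \<le> d + 1"
proof -
  have "(a + x) mod (d + 1) < d + 1"
    by simp
  then show ?thesis
    by (auto simp: ptrans_label_def)
qed

lemma kraus_index_eq_iff:
  "kraus_index d y a = kraus_index d x b \<longleftrightarrow> ptrans_label d (x, a) = ptrans_label d (y, b)"
proof (cases "a \<le> d + 1 \<and> b \<le> d + 1")
  case True
  let ?n = "int (d + 1)"
  have "kraus_index d y a = kraus_index d x b \<longleftrightarrow> (int a - int y) mod ?n = (int b - int x) mod ?n"
    using True by (simp add: kraus_index_def eq_nat_nat_iff)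
  also have "\<dots> \<longleftrightarrow> (int a + int x) mod ?n = (int b + int y) mod ?n"
    by (simp add: mod_eq_dvd_iff algebra_simps)
  also have "\<dots> \<longleftrightarrow> (a + x) mod (d + 1) = (b + y) mod (d + 1)"
    by (metis of_nat_add of_nat_mod of_nat_eq_iff)
  also have "\<dots> \<longleftrightarrow> ptrans_label d (x, a) = ptrans_label d (y, b)"
    using True by (simp add: ptrans_label_def)
  finally show ?thesis .
next
  case False
  then show ?thesis
    using kraus_index_le_iff[of d y a] kraus_index_le_iff[of d x b]
      ptrans_label_le_iff[of d x a] ptrans_label_le_iff[of d y b]
    by (auto simp: kraus_index_def ptrans_label_def)
qed

lemma sum_sum_Eunit:
  fixes F :: "nat \<Rightarrow> nat \<Rightarrow> complex"
  assumes "finite A" "x \<in> A" "y \<in> A"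
  shows "(\<Sum>r\<in>A. \<Sum>s\<in>A. Eunit x y r s * F r s) = F x y"
proof -
  have "Eunit x y r s * F r s = (if r = x then if s = y then F r s else 0 else 0)" for r s
    by (simp add: Eunit_def)
  then have "(\<Sum>s\<in>A. Eunit x y r s * F r s) = (if r = x then F r y else 0)" for r
    using assms by (cases "r = x") (simp_all add: sum.delta')
  then show ?thesis
    using assms by (simp add: sum.delta)
qed

lemma choi_apply:
  assumes "x \<in> {1..d}" "y \<in> {1..d}"
  shows "choi d m (x, a) (y, b) = Phi d m (Eunit x y) a b"
proof -
  have "Eunit r s x y = Eunit x y r s" for r s
    by (auto simp: Eunit_def)
  then show ?thesis
    using sum_sum_Eunit[of "{1..d}" x y "\<lambda>r s. Phi d m (Eunit r s) a b"] assms
    by (simp add: choi_def)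
qed

lemma Phi_Eunit_apply:
  assumes "r \<in> {1..d}" "s \<in> {1..d}"
  shows "Phi d m (Eunit r s) a b
    = 1 / of_nat (d * (d + m)) * (\<Sum>i\<in>{1..d+m}. cnj (Vmat d m i r a) * Vmat d m i s b)"
proof -
  have "(\<Sum>x\<in>{1..d}. \<Sum>y\<in>{1..d}. cnj (Vmat d m i x a) * Eunit r s x y * Vmat d m i y b)
      = cnj (Vmat d m i r a) * Vmat d m i s b" for i
    using sum_sum_Eunit[of "{1..d}" r s "\<lambda>x y. cnj (Vmat d m i x a) * Vmat d m i y b"] assms
    by (simp add: ac_simps)
  then show ?thesis
    by (simp add: Phi_def)
qed

lemma kraus_index_mem:
  assumes "1 \<le> m" "a \<le> d + m"
  shows "kraus_index d y a \<in> {1..d+m}"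
  using assms kraus_index_le_iff[of d y a] by (auto simp: kraus_index_def)

lemma ptrans1_choi_apply:
  assumes "1 \<le> m" "x \<in> {1..d}" "y \<in> {1..d}" "a \<in> {1..d+m}" "b \<in> {1..d+m}"
  shows "ptrans1 (choi d m) (x, a) (y, b)
    = 1 / of_nat (d * (d + m)) * of_bool (ptrans_label d (x, a) = ptrans_label d (y, b))"
proof -
  have "(\<Sum>i\<in>{1..d+m}. cnj (Vmat d m i y a) * Vmat d m i x b)
      = (\<Sum>i\<in>{1..d+m}. if i = kraus_index d y a
                          then of_bool (kraus_index d y a = kraus_index d x b) else 0)"
    by (intro sum.cong refl) (use assms in \<open>auto simp: Vmat_eq_kraus_index\<close>)
  also have "\<dots> = of_bool (kraus_index d y a = kraus_index d x b)"
    using assms kraus_index_mem[of m a d y] by (simp add: sum.delta)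
  finally show ?thesis
    using assms by (simp add: ptrans1_def choi_apply Phi_Eunit_apply kraus_index_eq_iff)
qed

theorem mainTheorem5:
  fixes d m :: nat
  assumes "d \<ge> 2" and "m \<ge> 1"
  shows "psd ({1..d} \<times> {1..d+m}) (ptrans1 (choi d m))"
proof -
  let ?c = "1 / of_nat (d * (d + m)) :: complex"
  have "psd ({1..d} \<times> {1..d+m}) (\<lambda>p q. ?c * of_bool (ptrans_label d p = ptrans_label d q))"
    by (intro psd_scale psd_same_label) (simp_all add: less_eq_complex_def)
  then show ?thesis
    using assms(2) by (subst psd_cong) (auto simp: ptrans1_choi_apply)
qed

end
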